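(* Let $X_\sigma$ be the root monoid associated with a cone $\sigma$, a $k$-dimensional regular face $\tau$ with primitive ray generators $p_1,\ldots,p_k$, and a set of Demazure roots $\{e_1^{(r)},e_2^{(r)}\}_{r=1}^k$ compatible with $\tau$. Let $\gamma$ be a face of $\sigma$ and let $E_\gamma$ be the set of idempotents ($x*x=x$) lying in the orbit $O_\gamma$. Then: (1) if $\tau\subseteq\gamma$, then $E_\gamma=\{x_\gamma\}$; (2) if there exists $r\in\{1,\ldots,k\}$ with $p_r\notin\gamma$ such that either both $e_1^{(r)},e_2^{(r)}\notin\gamma^\perp$ or both $e_1^{(r)},e_2^{(r)}\in\gamma^\perp$, then $E_\gamma=\varnothing$; (3) if for every $r\in\{1,\ldots,k\}$ with $p_r\notin\gamma$ exactly one of $e_1^{(r)},e_2^{(r)}$ lies in $\gamma^\perp$, then $E_\gamma=\{x\in O_\gamma:\chi^u(x)=1\ \text{for all } u\in\operatorname{cone}(\tau,\gamma)^\perp\cap S_\sigma\}$.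
   Context: $\mathbb{K}$ algebraically closed of characteristic zero; $N$ a lattice, $M$ its dual, $\sigma\subseteq N_\mathbb{Q}$ a strongly convex rational polyhedral cone, $S_\sigma=\sigma^\vee\cap M$, $X_\sigma=\operatorname{Spec}\bigoplus_{u\in S_\sigma}\mathbb{K}\chi^u$; points of $X_\sigma$ are semigroup homomorphisms $S_\sigma\to(\mathbb{K},\cdot)$. For a face $\gamma$ of $\sigma$, $x_\gamma$ is the point with $\chi^u(x_\gamma)=1$ if $u\in\gamma^\perp$ and $0$ otherwise, and $O_\gamma$ is the torus orbit of $x_\gamma$, i.e. the set of points $x$ with $\chi^u(x)\ne0$ iff $u\in\gamma^\perp$. $\operatorname{cone}(\tau,\gamma)$ is the cone generated by $\tau$ and $\gamma$. Regular face: primitive ray generators are part of a basis of $N$. Demazure root for a ray generator $p_i$ of $\sigma$: $e\in M$ with $\langle p_i,e\rangle=-1$, $\langle p_j,e\rangle\ge0$ for the other ray generators $p_j$. Compatibility with $\tau$: $\langle p_s,e_1^{(r)}\rangle=\langle p_s,e_2^{(r)}\rangle=-\delta_{rs}$, $r,s=1,\ldots,k$. The root monoid is $X_\sigma$ with multiplication $*$ given by $\chi^u(x*y)=\sum_{\bar i+\bar j=\langle\bar p,u\rangle}\prod_{r}\binom{\langle p_r,u\rangle}{i_r}\chi^{u+\sum_ri_re_2^{(r)}}(x)\,\chi^{u+\sum_rj_re_1^{(r)}}(y)$, $u\in S_\sigma$, where $\langle\bar p,u\rangle=(\langle p_1,u\rangle,\ldots,\langle p_k,u\rangle)$ and $\bar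 i,\bar j\in\mathbb{Z}_{\ge0}^k$ (the dual of the comultiplication $\chi^u\mapsto\chi^u\otimes\chi^u\prod_r(1\otimes\chi^{e_1^{(r)}}+\chi^{e_2^{(r)}}\otimes1)^{\langle p_r,u\rangle}$). *)

theory Defs
  imports "HOL-Analysis.Analysis" "HOL-Library.FuncSet" "HOL-Computational_Algebra.Polynomial"
begin

text \<open>The lattice N is modelled as int^'n (finite index type 'n), its dual M also as int^'n
  with the standard pairing; N_Q = M_Q = rat^'n.\<close>

definition emb :: "int ^ 'n \<Rightarrow> rat ^ 'n" where
  "emb v = (\<chi> i. of_int (v $ i))"

definition qdot :: "rat ^ 'n::finite \<Rightarrow> rat ^ 'n \<Rightarrow> rat" where
  "qdot v w = (\<Sum>i\<in>UNIV. v $ i * w $ i)"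

definition ipair :: "int ^ 'n::finite \<Rightarrow> int ^ 'n \<Rightarrow> int" where
  "ipair v w = (\<Sum>i\<in>UNIV. v $ i * w $ i)"

definition qcone :: "(rat ^ 'n) set \<Rightarrow> (rat ^ 'n) set" where
  "qcone A = {v. \<exists>F c. finite F \<and> F \<subseteq> A \<and> (\<forall>a\<in>F. 0 \<le> c a) \<and> v = (\<Sum>a\<in>F. c a *s a)}"

definition rat_poly_cone :: "(rat ^ 'n) set \<Rightarrow> bool" where
  "rat_poly_cone \<sigma> \<longleftrightarrow> (\<exists>R :: (int ^ 'n) set. finite R \<and> \<sigma> = qcone (emb ` R))"

definition strongly_convex :: "(rat ^ 'n) set \<Rightarrow> bool" where
  "strongly_convex \<sigma> \<longleftrightarrow> \<sigma> \<inter> uminus ` \<sigma> = {0}"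

definition is_face :: "(rat ^ 'n::finite) set \<Rightarrow> (rat ^ 'n) set \<Rightarrow> bool" where
  "is_face \<sigma> \<gamma> \<longleftrightarrow> (\<exists>m. (\<forall>v\<in>\<sigma>. 0 \<le> qdot v m) \<and> \<gamma> = {v\<in>\<sigma>. qdot v m = 0})"

definition primitive :: "int ^ 'n \<Rightarrow> bool" where
  "primitive p \<longleftrightarrow> p \<noteq> 0 \<and> (\<forall>(m::int) q. p = m *s q \<longrightarrow> m = 1 \<or> m = -1)"

definition prim_ray_gens :: "(rat ^ 'n::finite) set \<Rightarrow> (int ^ 'n) set" where
  "prim_ray_gens \<sigma> = {p. primitive p \<and> is_face \<sigma> (qcone {emb p})}"

definition lattice_basis :: "('n \<Rightarrow> int ^ 'n) \<Rightarrow> bool" where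
  "lattice_basis b \<longleftrightarrow> (\<forall>v::int ^ 'n::finite. \<exists>!c::'n \<Rightarrow> int. v = (\<Sum>i\<in>UNIV. c i *s b i))"

definition part_of_basis :: "(nat \<Rightarrow> int ^ 'n::finite) \<Rightarrow> nat \<Rightarrow> bool" where
  "part_of_basis p k \<longleftrightarrow> (\<exists>b f. lattice_basis b \<and> inj_on f {..<k} \<and> (\<forall>r<k. b (f r) = p r))"

definition Ssg :: "(rat ^ 'n::finite) set \<Rightarrow> (int ^ 'n) set" where
  "Ssg \<sigma> = {u. \<forall>v\<in>\<sigma>. 0 \<le> qdot v (emb u)}"

definition perp :: "(rat ^ 'n::finite) set \<Rightarrow> (int ^ 'n) set" where
  "perp \<gamma> = {u. \<forall>v\<in>\<gamma>. qdot v (emb u) = 0}"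

definition demazure_root :: "(rat ^ 'n::finite) set \<Rightarrow> int ^ 'n \<Rightarrow> int ^ 'n \<Rightarrow> bool" where
  "demazure_root \<sigma> p e \<longleftrightarrow> p \<in> prim_ray_gens \<sigma> \<and> ipair p e = -1 \<and>
     (\<forall>q \<in> prim_ray_gens \<sigma> - {p}. 0 \<le> ipair q e)"

text \<open>Points of X_sigma: monoid homomorphisms S_sigma -> (K,*), extended by 0 outside S_sigma.\<close>
definition Xpts :: "(rat ^ 'n::finite) set \<Rightarrow> (int ^ 'n \<Rightarrow> 'k::field) set" where
  "Xpts \<sigma> = {x. x 0 = 1 \<and> (\<forall>u\<in>Ssg \<sigma>. \<forall>v\<in>Ssg \<sigma>. x (u + v) = x u * x v)
                 \<and> (\<forall>u. u \<notin> Ssg \<sigma> \<longrightarrow> x u = 0)}"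

definition xpt :: "(rat ^ 'n::finite) set \<Rightarrow> (rat ^ 'n) set \<Rightarrow> (int ^ 'n \<Rightarrow> 'k::field)" where
  "xpt \<sigma> \<gamma> = (\<lambda>u. if u \<in> Ssg \<sigma> then (if u \<in> perp \<gamma> then 1 else 0) else 0)"

definition orbit :: "(rat ^ 'n::finite) set \<Rightarrow> (rat ^ 'n) set \<Rightarrow> (int ^ 'n \<Rightarrow> 'k::field) set" where
  "orbit \<sigma> \<gamma> = {x \<in> Xpts \<sigma>. \<forall>u\<in>Ssg \<sigma>. (x u \<noteq> 0 \<longleftrightarrow> u \<in> perp \<gamma>)}"

definition rmul :: "(rat ^ 'n::finite) set \<Rightarrow> (nat \<Rightarrow> int ^ 'n) \<Rightarrow> (nat \<Rightarrow> int ^ 'n) \<Rightarrow>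
     (nat \<Rightarrow> int ^ 'n) \<Rightarrow> nat \<Rightarrow> (int ^ 'n \<Rightarrow> 'k::field) \<Rightarrow> (int ^ 'n \<Rightarrow> 'k) \<Rightarrow> (int ^ 'n \<Rightarrow> 'k)" where
  "rmul \<sigma> p e1 e2 k x y = (\<lambda>u. if u \<in> Ssg \<sigma> then
      (\<Sum>i \<in> PiE {..<k} (\<lambda>r. {..nat (ipair (p r) u)}).
         (\<Prod>r<k. of_nat (nat (ipair (p r) u) choose i r))
         * x (u + (\<Sum>r<k. int (i r) *s e2 r))
         * y (u + (\<Sum>r<k. int (nat (ipair (p r) u) - i r) *s e1 r)))
    else 0)"

definition alg_closed_field :: "'k::field itself \<Rightarrow> bool" where
  "alg_closed_field _ \<longleftrightarrow> (\<forall>q::'k poly. 0 < degree q \<longrightarrow> (\<exists>z. poly q z = 0))"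

end

theory Submission
  imports Defs
begin

text \<open>
  A point x of the orbit O_gamma is nonzero exactly on S_sigma \<inter> gamma^perp, so a summand of
  chi^u(x * x) survives only if both of its shifted characters lie in gamma^perp. A Demazure root of
  a ray p_r outside gamma is nonnegative on gamma, because gamma is spanned by the primitive ray
  generators it contains (a consequence of Farkas' lemma). Hence a surviving summand needs
  u \<in> gamma^perp and uses e_2^(r) (resp. e_1^(r)) only if that root lies in gamma^perp. Characters
  of degree zero in all p_r multiply plainly, so an idempotent is 1 on them.
  (1) If tau \<subseteq> gamma, every character in gamma^perp has degree zero.
  (2) If neither root of some p_r outside gamma lies in gamma^perp, x * x vanishes at a character of
  gamma^perp of positive p_r-degree; if both do, at a character w of degree one in p_r the two
  summands give x(w) = 2 x(w).
  (3) Otherwise exactly one summand survives, and it equals x(u) exactly when x is 1 on the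
  characters of degree zero in gamma^perp, which form cone(tau, gamma)^perp \<inter> S_sigma.
\<close>

lemma qdot_diff_left: "qdot (a - b) c = qdot a c - qdot b c"
  unfolding qdot_def by (simp add: left_diff_distrib sum_subtractf)

lemma qdot_neg_left: "qdot (- a) c = - qdot a c"
  unfolding qdot_def by (simp add: sum_negf)

lemma qdot_scale_left: "qdot (r *s a) c = r * qdot a c"
  unfolding qdot_def by (simp add: sum_distrib_left mult.assoc)

lemma qdot_sum_left: "qdot (\<Sum>i\<in>I. f i) c = (\<Sum>i\<in>I. qdot (f i) c)"
  unfolding qdot_def by (simp add: sum_distrib_right sum.swap[of _ I])

lemma qdot_add_right: "qdot c (a + b) = qdot c a + qdot c b"
  unfolding qdot_def by (simp add: distrib_left sum.distrib)

lemma qdot_diff_right: "qdot c (a - b) = qdot c a - qdot c b"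
  unfolding qdot_def by (simp add: right_diff_distrib sum_subtractf)

lemma qdot_scale_right: "qdot c (r *s a) = r * qdot c a"
  unfolding qdot_def by (simp add: sum_distrib_left algebra_simps)

lemma qdot_sum_right: "qdot c (\<Sum>i\<in>I. f i) = (\<Sum>i\<in>I. qdot c (f i))"
  unfolding qdot_def by (simp add: sum_distrib_left sum.swap[of _ I])

lemma qdot_self_pos: "b \<noteq> 0 \<Longrightarrow> 0 < qdot b b"
proof -
  assume "b \<noteq> 0"
  then obtain j where j: "b $ j \<noteq> 0" by (auto simp: vec_eq_iff)
  have "0 < b $ j * b $ j" using j by (auto simp: zero_less_mult_iff linorder_neq_iff)
  also have "\<dots> \<le> (\<Sum>i\<in>UNIV. b $ i * b $ i)"
    by (rule member_le_sum) auto
  finally show ?thesis by (simp add: qdot_def)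
qed

lemma emb_add: "emb (u + w) = emb u + emb w"
  by (simp add: emb_def vec_eq_iff)

lemma emb_scale: "emb (c *s u) = of_int c *s emb u"
  by (simp add: emb_def vec_eq_iff)

lemma emb_eq_0_iff: "emb u = 0 \<longleftrightarrow> u = 0"
  by (simp add: emb_def vec_eq_iff)

lemma qdot_emb: "qdot (emb u) (emb w) = of_int (ipair u w)"
  by (simp add: qdot_def ipair_def emb_def)

lemma ipair_add_right: "ipair p (u + w) = ipair p u + ipair p w"
  by (simp add: ipair_def distrib_left sum.distrib)

lemma ipair_scale_right: "ipair p (c *s u) = c * ipair p u"
  by (simp add: ipair_def sum_distrib_left algebra_simps)

lemma ipair_sum_right: "ipair p (\<Sum>i\<in>I. f i) = (\<Sum>i\<in>I. ipair p (f i))"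
  unfolding ipair_def by (simp add: sum_distrib_left sum.swap[of _ I])

lemma ipair_sum_dual_family:
  fixes k :: nat
  assumes "\<forall>r<k. ipair q (f r) = (if r = t then -1 else 0)" and "t < k"
  shows "ipair q (\<Sum>r<k. int (a r) *s f r) = - int (a t)"
proof -
  have "ipair q (\<Sum>r<k. int (a r) *s f r) = (\<Sum>r<k. if r = t then - int (a r) else 0)"
    unfolding ipair_sum_right ipair_scale_right using assms(1) by (intro sum.cong) auto
  also have "\<dots> = - int (a t)" using assms(2) by (subst sum.delta) auto
  finally show ?thesis .
qed

section \<open>Rational polyhedral cones\<close>

lemma farkas_alternative:
  fixes a :: "'i \<Rightarrow> rat ^ 'n::finite" and b :: "rat ^ 'n"
  assumes "finite I"
  shows "(\<exists>x. (\<forall>i\<in>I. qdot (a i) x \<le> 0) \<and> 0 < qdot b x)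
       \<or> (\<exists>l. (\<forall>i\<in>I. 0 \<le> l i) \<and> b = (\<Sum>i\<in>I. l i *s a i))"
  using assms
proof (induction I arbitrary: a b rule: finite_induct)
  case empty
  show ?case
  proof (cases "b = 0")
    case False then show ?thesis using qdot_self_pos[of b] by auto
  qed auto
next
  case (insert j I)
  from insert.IH[of a b] show ?case
  proof
    assume "\<exists>l. (\<forall>i\<in>I. 0 \<le> l i) \<and> b = (\<Sum>i\<in>I. l i *s a i)"
    then obtain l where l: "\<forall>i\<in>I. 0 \<le> l i" "b = (\<Sum>i\<in>I. l i *s a i)" by blast
    have "(\<Sum>i\<in>insert j I. (l(j:=0)) i *s a i) = (\<Sum>i\<in>I. l i *s a i)"
      using insert.hyps by (simp add: vec_eq_iff) (intro allI sum.cong, auto)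
    then show ?thesis using l by (intro disjI2 exI[of _ "l(j:=0)"]) auto
  next
    assume "\<exists>x. (\<forall>i\<in>I. qdot (a i) x \<le> 0) \<and> 0 < qdot b x"
    then obtain x where x: "\<forall>i\<in>I. qdot (a i) x \<le> 0" "0 < qdot b x" by blast
    show ?thesis
    proof (cases "qdot (a j) x \<le> 0")
      case True then show ?thesis using x by (intro disjI1 exI[of _ x]) auto
    next
      case False
      \<comment> \<open>project along \<open>a j\<close> onto the hyperplane \<open>qdot _ x = 0\<close> and use the induction hypothesis there\<close>
      define \<alpha> where "\<alpha> = qdot (a j) x"
      have apos: "0 < \<alpha>" using False by (simp add: \<alpha>_def)
      define a' where "a' i = a i - (qdot (a i) x / \<alpha>) *s a j" for i
      define b' where "b' = b - (qdot b x / \<alpha>) *s a j"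
      from insert.IH[of a' b'] show ?thesis
      proof
        assume "\<exists>y. (\<forall>i\<in>I. qdot (a' i) y \<le> 0) \<and> 0 < qdot b' y"
        then obtain y where y: "\<forall>i\<in>I. qdot (a' i) y \<le> 0" "0 < qdot b' y" by blast
        define z where "z = y - (qdot (a j) y / \<alpha>) *s x"
        have zi: "qdot c z = qdot c y - (qdot (a j) y / \<alpha>) * qdot c x" for c
          by (simp add: z_def qdot_diff_right qdot_scale_right)
        have "qdot (a i) z = qdot (a' i) y" for i
          by (simp add: zi a'_def qdot_diff_left qdot_scale_left)
        moreover have "qdot b z = qdot b' y"
          by (simp add: zi b'_def qdot_diff_left qdot_scale_left)
        moreover have "qdot (a j) z = 0" using apos by (simp add: zi \<alpha>_def)
        ultimately show ?thesis using y by (intro disjI1 exI[of _ z]) auto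
      next
        assume "\<exists>l. (\<forall>i\<in>I. 0 \<le> l i) \<and> b' = (\<Sum>i\<in>I. l i *s a' i)"
        then obtain l where l: "\<forall>i\<in>I. 0 \<le> l i" "b' = (\<Sum>i\<in>I. l i *s a' i)" by blast
        define cj where "cj = (qdot b x - (\<Sum>i\<in>I. l i * qdot (a i) x)) / \<alpha>"
        have "(\<Sum>i\<in>I. l i * qdot (a i) x) \<le> 0"
          using l(1) x(1) by (intro sum_nonpos) (simp add: mult_nonneg_nonpos)
        then have cj0: "0 \<le> cj" using apos x(2) by (simp add: cj_def)
        have "b' = (\<Sum>i\<in>I. l i *s a i - (l i * qdot (a i) x / \<alpha>) *s a j)"
          unfolding l(2) a'_def by (intro sum.cong refl) (simp add: vec_eq_iff algebra_simps)
        also have "\<dots> = (\<Sum>i\<in>I. l i *s a i) - ((\<Sum>i\<in>I. l i * qdot (a i) x) / \<alpha>) *s a j"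
          by (simp add: sum_subtractf vec_eq_iff sum_distrib_right sum_divide_distrib)
        finally have "b = (\<Sum>i\<in>I. l i *s a i) + cj *s a j"
          unfolding cj_def b'_def by (simp add: vec_eq_iff diff_divide_distrib algebra_simps)
        also have "\<dots> = (\<Sum>i\<in>insert j I. (l(j := cj)) i *s a i)"
          using insert.hyps by (simp add: add.commute) (intro sum.cong, auto)
        finally show ?thesis using l(1) cj0 by (intro disjI2 exI[of _ "l(j := cj)"]) auto
      qed
    qed
  qed
qed

lemma qcone_finite:
  assumes "finite A"
  shows "v \<in> qcone A \<longleftrightarrow> (\<exists>c. (\<forall>a\<in>A. 0 \<le> c a) \<and> v = (\<Sum>a\<in>A. c a *s a))"
proof
  assume "v \<in> qcone A"
  then obtain F c where F: "finite F" "F \<subseteq> A" "\<forall>a\<in>F. 0 \<le> c a" "v = (\<Sum>a\<in>F. c a *s a)"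
    unfolding qcone_def by blast
  define c' where "c' a = (if a \<in> F then c a else 0)" for a
  have "(\<Sum>a\<in>A. c' a *s a) = (\<Sum>a\<in>F. c' a *s a)"
    using F assms by (intro sum.mono_neutral_right) (auto simp: c'_def vec_eq_iff)
  also have "\<dots> = v" using F by (simp add: c'_def)
  finally show "\<exists>c. (\<forall>a\<in>A. 0 \<le> c a) \<and> v = (\<Sum>a\<in>A. c a *s a)"
    using F by (intro exI[of _ c']) (auto simp: c'_def)
next
  assume "\<exists>c. (\<forall>a\<in>A. 0 \<le> c a) \<and> v = (\<Sum>a\<in>A. c a *s a)"
  then show "v \<in> qcone A" using assms unfolding qcone_def by blast
qed

lemma qcone_mono: "A \<subseteq> B \<Longrightarrow> qcone A \<subseteq> qcone B"
  unfolding qcone_def by blast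

lemma zero_in_qcone: "0 \<in> qcone A"
  unfolding qcone_def by (intro CollectI exI[of _ "{}"]) auto

lemma generator_in_qcone: "a \<in> A \<Longrightarrow> a \<in> qcone A"
  unfolding qcone_def by (intro CollectI exI[of _ "{a}"] exI[of _ "\<lambda>_. 1"]) auto

lemma qcone_single: "qcone {a} = {c *s a | c. 0 \<le> c}"
  by (auto simp: qcone_finite)

lemma qcone_single_scale:
  assumes d: "0 < d"
  shows "qcone {d *s a} = qcone {a}"
  unfolding qcone_single
proof (intro equalityI subsetI)
  fix v assume "v \<in> {c *s (d *s a) |c. 0 \<le> c}"
  then obtain c where "0 \<le> c" "v = (c * d) *s a" by (auto simp: vector_smult_assoc)
  then show "v \<in> {c *s a |c. 0 \<le> c}" using d by auto
next
  fix v assume "v \<in> {c *s a |c. 0 \<le> c}"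
  then obtain c where c: "0 \<le> c" "v = c *s a" by blast
  then have "v = (c / d) *s (d *s a)" "0 \<le> c / d" using d by (simp_all add: vector_smult_assoc)
  then show "v \<in> {c *s (d *s a) |c. 0 \<le> c}" by blast
qed

lemma qcone_scale:
  assumes "v \<in> qcone A" "0 \<le> t"
  shows "t *s v \<in> qcone A"
proof -
  obtain F c where F: "finite F" "F \<subseteq> A" "\<forall>a\<in>F. 0 \<le> c a" "v = (\<Sum>a\<in>F. c a *s a)"
    using assms(1) unfolding qcone_def by blast
  have "t *s v = (\<Sum>a\<in>F. (t * c a) *s a)"
    unfolding F(4) sum_cmul[symmetric] vector_smult_assoc ..
  then show ?thesis
    unfolding qcone_def using F assms(2) by (intro CollectI exI[of _ F] exI[of _ "\<lambda>a. t * c a"]) auto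
qed

lemma qcone_add:
  assumes "v \<in> qcone A" "w \<in> qcone A"
  shows "v + w \<in> qcone A"
proof -
  obtain F c where F: "finite F" "F \<subseteq> A" "\<forall>a\<in>F. 0 \<le> c a" "v = (\<Sum>a\<in>F. c a *s a)"
    using assms(1) unfolding qcone_def by blast
  obtain G d where G: "finite G" "G \<subseteq> A" "\<forall>a\<in>G. 0 \<le> d a" "w = (\<Sum>a\<in>G. d a *s a)"
    using assms(2) unfolding qcone_def by blast
  define e where "e a = (if a \<in> F then c a else 0) + (if a \<in> G then d a else 0)" for a
  have "(\<Sum>a\<in>F \<union> G. e a *s a)
      = (\<Sum>a\<in>F \<union> G. if a \<in> F then c a *s a else 0) + (\<Sum>a\<in>F \<union> G. if a \<in> G then d a *s a else 0)"
    unfolding e_def sum.distrib[symmetric] by (intro sum.cong) (auto simp: vec_eq_iff algebra_simps)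
  also have "\<dots> = v + w"
    using F(1) G(1) by (simp add: sum.inter_restrict[symmetric] Int_absorb1 Int_absorb2 F(4) G(4))
  finally show ?thesis
    unfolding qcone_def using F G by (intro CollectI exI[of _ "F \<union> G"] exI[of _ e]) (auto simp: e_def)
qed

lemma qcone_sum: "finite I \<Longrightarrow> (\<And>i. i \<in> I \<Longrightarrow> f i \<in> qcone A) \<Longrightarrow> (\<Sum>i\<in>I. f i) \<in> qcone A"
  by (induction I rule: finite_induct) (auto simp: zero_in_qcone qcone_add)

lemma qcone_subset_qcone:
  assumes "A \<subseteq> qcone B"
  shows "qcone A \<subseteq> qcone B"
proof
  fix v assume "v \<in> qcone A"
  then obtain F c where F: "finite F" "F \<subseteq> A" "\<forall>a\<in>F. 0 \<le> c a" "v = (\<Sum>a\<in>F. c a *s a)"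
    unfolding qcone_def by blast
  show "v \<in> qcone B"
    unfolding F(4) using F assms by (intro qcone_sum qcone_scale) auto
qed

lemma qcone_dual_nonneg: "v \<in> qcone A \<Longrightarrow> (\<And>a. a \<in> A \<Longrightarrow> 0 \<le> qdot a m) \<Longrightarrow> 0 \<le> qdot v m"
  unfolding qcone_def by (auto simp: qdot_sum_left qdot_scale_left subset_iff intro!: sum_nonneg)

lemma qcone_dual_zero: "v \<in> qcone A \<Longrightarrow> (\<And>a. a \<in> A \<Longrightarrow> qdot a m = 0) \<Longrightarrow> qdot v m = 0"
  unfolding qcone_def by (auto simp: qdot_sum_left qdot_scale_left subset_iff)

lemma qcone_inter_hyperplane:
  assumes nonneg: "\<And>a. a \<in> A \<Longrightarrow> 0 \<le> qdot a m" and v: "v \<in> qcone A" "qdot v m = 0"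
  shows "v \<in> qcone {a \<in> A. qdot a m = 0}"
proof -
  obtain F c where F: "finite F" "F \<subseteq> A" "\<forall>a\<in>F. 0 \<le> c a" "v = (\<Sum>a\<in>F. c a *s a)"
    using v(1) unfolding qcone_def by blast
  have terms_nonneg: "\<And>a. a \<in> F \<Longrightarrow> 0 \<le> c a * qdot a m" using F nonneg by auto
  have "(\<Sum>a\<in>F. c a * qdot a m) = 0" using v(2) by (simp add: F(4) qdot_sum_left qdot_scale_left)
  then have "\<forall>a\<in>F. c a * qdot a m = 0" using sum_nonneg_eq_0_iff[where f="\<lambda>a. c a * qdot a m", OF F(1) terms_nonneg] by blast
  then have "v = (\<Sum>a\<in>{a\<in>F. qdot a m = 0}. c a *s a)"
    unfolding F(4) using F(1) by (intro sum.mono_neutral_right) (auto simp: vec_eq_iff)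
  then show ?thesis
    unfolding qcone_def using F by (intro CollectI exI[of _ "{a\<in>F. qdot a m = 0}"] exI[of _ c]) auto
qed

lemma qcone_remove_redundant:
  assumes A: "finite A" "r \<in> qcone (A - {r})"
  shows "qcone A = qcone (A - {r})"
proof
  have "a \<in> qcone (A - {r})" if "a \<in> A" for a
    using that A(2) by (cases "a = r") (simp_all add: generator_in_qcone)
  then have "A \<subseteq> qcone (A - {r})" by blast
  then show "qcone A \<subseteq> qcone (A - {r})" by (rule qcone_subset_qcone)
qed (rule qcone_mono, auto)

lemma exists_irredundant_generators:
  assumes "finite A"
  shows "\<exists>B\<subseteq>A. qcone B = qcone A \<and> (\<forall>r\<in>B. r \<notin> qcone (B - {r}))"
  using assms
proof (induction "card A" arbitrary: A rule: less_induct)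
  case less
  show ?case
  proof (cases "\<forall>r\<in>A. r \<notin> qcone (A - {r})")
    case False
    then obtain r where r: "r \<in> A" "r \<in> qcone (A - {r})" by blast
    have "card (A - {r}) < card A" using r less.prems by (intro card_Diff1_less)
    then obtain B where "B \<subseteq> A - {r}" "qcone B = qcone (A - {r})" "\<forall>r\<in>B. r \<notin> qcone (B - {r})"
      using less.hyps[of "A - {r}"] less.prems by auto
    then show ?thesis using qcone_remove_redundant[OF less.prems r(2)] by (intro exI[of _ B]) auto
  qed blast
qed

lemma strongly_convex_uminus_eq_0: "strongly_convex C \<Longrightarrow> v \<in> C \<Longrightarrow> - v \<in> C \<Longrightarrow> v = 0"
  unfolding strongly_convex_def by (metis IntI image_eqI minus_minus singletonD)

lemma irredundant_diff_notin_qcone: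
  fixes B :: "(rat ^ 'n::finite) set"
  assumes B: "finite B" and sc: "strongly_convex (qcone B)"
    and irred: "\<forall>h\<in>B. h \<notin> qcone (B - {h})" and r: "r \<in> B" and g: "g \<in> B" "g \<noteq> r"
  shows "c *s r - g \<notin> qcone B"
proof
  assume "c *s r - g \<in> qcone B"
  then obtain lam where lam: "\<forall>h\<in>B. 0 \<le> lam h" "c *s r - g = (\<Sum>h\<in>B. lam h *s h)"
    using qcone_finite[OF B] by blast
  have "(\<Sum>h\<in>B. lam h *s h) = lam r *s r + (\<Sum>h\<in>B-{r}. lam h *s h)"
    using B r by (simp add: sum.remove)
  then have g_eq: "g + (\<Sum>h\<in>B-{r}. lam h *s h) = (c - lam r) *s r"
    using lam(2) by (simp add: vec_eq_iff algebra_simps)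
  have rest: "(\<Sum>h\<in>B-{r}. lam h *s h) \<in> qcone (B - {r})"
    using lam(1) B by (intro qcone_sum qcone_scale generator_in_qcone) auto
  show False
  proof (cases "lam r < c")
    case True
    have "g \<in> qcone (B - {r})" using g by (simp add: generator_in_qcone)
    then have "(c - lam r) *s r \<in> qcone (B - {r})"
      unfolding g_eq[symmetric] using rest by (rule qcone_add)
    then have "inverse (c - lam r) *s ((c - lam r) *s r) \<in> qcone (B - {r})"
      by (rule qcone_scale) (use True in simp)
    moreover have "inverse (c - lam r) * (c - lam r) = 1" using True by simp
    ultimately have "r \<in> qcone (B - {r})" by (simp only: vector_smult_assoc vector_smult_lid)
    then show False using irred r by blast
  next
    case False
    have "- g = (\<Sum>h\<in>B-{r}. lam h *s h) + (lam r - c) *s r"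
      using g_eq by (simp add: vec_eq_iff algebra_simps)
    moreover have "(\<Sum>h\<in>B-{r}. lam h *s h) + (lam r - c) *s r \<in> qcone B"
    proof (rule qcone_add)
      show "(\<Sum>h\<in>B-{r}. lam h *s h) \<in> qcone B" using rest qcone_mono[of "B - {r}" B] by blast
      show "(lam r - c) *s r \<in> qcone B" using False r by (intro qcone_scale generator_in_qcone) auto
    qed
    ultimately have "g = 0"
      using strongly_convex_uminus_eq_0[OF sc] generator_in_qcone[OF g(1)] by metis
    moreover have "g \<notin> qcone (B - {g})" using irred g(1) by blast
    ultimately show False using zero_in_qcone by metis
  qed
qed

lemma irredundant_separating_functional:
  fixes B :: "(rat ^ 'n::finite) set"
  assumes B: "finite B" and sc: "strongly_convex (qcone B)"
    and irred: "\<forall>h\<in>B. h \<notin> qcone (B - {h})" and r: "r \<in> B" and g: "g \<in> B" "g \<noteq> r"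
  shows "\<exists>m. (\<forall>h\<in>B. 0 \<le> qdot h m) \<and> qdot r m = 0 \<and> 0 < qdot g m"
proof -
  define I where "I = insert None (Some ` B)"
  define a where "a i = (case i of None \<Rightarrow> r | Some h \<Rightarrow> - h)" for i
  have "finite I" using B by (simp add: I_def)
  from farkas_alternative[OF this, of a g] show ?thesis
  proof
    assume "\<exists>x. (\<forall>i\<in>I. qdot (a i) x \<le> 0) \<and> 0 < qdot g x"
    then obtain x where x: "qdot r x \<le> 0" "\<forall>h\<in>B. 0 \<le> qdot h x" "0 < qdot g x"
      by (auto simp: I_def a_def qdot_neg_left)
    then show ?thesis using r by (intro exI[of _ x]) force
  next
    assume "\<exists>l. (\<forall>i\<in>I. 0 \<le> l i) \<and> g = (\<Sum>i\<in>I. l i *s a i)"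
    then obtain l where l: "\<forall>i\<in>I. 0 \<le> l i" "g = (\<Sum>i\<in>I. l i *s a i)" by blast
    have "l None *s r - g = (\<Sum>h\<in>B. l (Some h) *s h)"
      using B unfolding l(2) I_def by (simp add: a_def sum.reindex sum_negf[symmetric])
    then have "l None *s r - g \<in> qcone B"
      using l(1) B by (subst qcone_finite) (auto simp: I_def)
    then show ?thesis using irredundant_diff_notin_qcone[OF B sc irred r g] by blast
  qed
qed

lemma irredundant_exposing_functional:
  fixes B :: "(rat ^ 'n::finite) set"
  assumes B: "finite B" and sc: "strongly_convex (qcone B)"
    and irred: "\<forall>h\<in>B. h \<notin> qcone (B - {h})" and r: "r \<in> B"
  shows "\<exists>m. (\<forall>h\<in>B. 0 \<le> qdot h m) \<and> qdot r m = 0 \<and> (\<forall>h\<in>B-{r}. 0 < qdot h m)"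
proof -
  obtain M where M: "\<forall>g\<in>B-{r}. (\<forall>h\<in>B. 0 \<le> qdot h (M g)) \<and> qdot r (M g) = 0 \<and> 0 < qdot g (M g)"
    using irredundant_separating_functional[OF B sc irred r] by (metis Diff_iff singletonI)
  define m where "m = (\<Sum>g\<in>B-{r}. M g)"
  have "\<forall>h\<in>B. 0 \<le> qdot h m" using M by (auto simp: m_def qdot_sum_right intro!: sum_nonneg)
  moreover have "qdot r m = 0" using M by (simp add: m_def qdot_sum_right)
  moreover have "0 < qdot h m" if h: "h \<in> B - {r}" for h
  proof -
    have "0 < qdot h (M h)" using M h by blast
    also have "\<dots> \<le> (\<Sum>g\<in>B-{r}. qdot h (M g))"
      using M h B by (intro member_le_sum) auto
    finally show ?thesis by (simp add: m_def qdot_sum_right)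
  qed
  ultimately show ?thesis by blast
qed

lemma irredundant_generator_ray_face:
  fixes B :: "(rat ^ 'n::finite) set"
  assumes B: "finite B" and sc: "strongly_convex (qcone B)"
    and irred: "\<forall>h\<in>B. h \<notin> qcone (B - {h})" and h: "h \<in> B"
  shows "is_face (qcone B) (qcone {h})"
proof -
  obtain m where m: "\<forall>g\<in>B. 0 \<le> qdot g m" "qdot h m = 0" "\<forall>g\<in>B-{h}. 0 < qdot g m"
    using irredundant_exposing_functional[OF B sc irred h] by blast
  have gens: "{g\<in>B. qdot g m = 0} = {h}" using m h by force
  have "{v \<in> qcone B. qdot v m = 0} = qcone {h}"
  proof
    show "{v \<in> qcone B. qdot v m = 0} \<subseteq> qcone {h}"
      using qcone_inter_hyperplane[of B m] m(1) gens by auto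
    show "qcone {h} \<subseteq> {v \<in> qcone B. qdot v m = 0}"
      using qcone_mono[of "{h}" B] qcone_dual_zero[of _ "{h}" m] h m(2) by auto
  qed
  moreover have "\<forall>v\<in>qcone B. 0 \<le> qdot v m" using qcone_dual_nonneg[of _ B m] m(1) by blast
  ultimately show ?thesis unfolding is_face_def by blast
qed

lemma primitive_decomposition:
  fixes \<rho> :: "int ^ 'n::finite"
  assumes "\<rho> \<noteq> 0"
  shows "\<exists>P d. primitive P \<and> 0 < d \<and> \<rho> = d *s P"
proof -
  define g where "g = Gcd (range (\<lambda>i. \<rho> $ i))"
  have "g \<noteq> 0" using assms by (auto simp: g_def vec_eq_iff)
  moreover have "0 \<le> g" unfolding g_def by simp
  ultimately have g: "0 < g" by linarith
  have "g dvd \<rho> $ i" for i unfolding g_def by (rule Gcd_dvd) auto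
  then have \<rho>P: "\<rho> = g *s (\<chi> i. \<rho> $ i div g)" by (simp add: vec_eq_iff)
  have "primitive (\<chi> i. \<rho> $ i div g)"
    unfolding primitive_def
  proof (intro conjI allI impI)
    show "(\<chi> i. \<rho> $ i div g) \<noteq> 0" using \<rho>P assms by auto
  next
    fix m :: int and q assume "(\<chi> i. \<rho> $ i div g) = m *s q"
    then have "g * m dvd \<rho> $ i" for i using \<rho>P by (simp add: mult.assoc)
    then have "g * m dvd g" unfolding g_def by (intro Gcd_greatest) auto
    then have "m dvd 1" using g by (metis dvd_mult_cancel_left mult.right_neutral less_irrefl)
    then show "m = 1 \<or> m = -1" by auto
  qed
  then show ?thesis using g \<rho>P by blast
qed

section \<open>Faces, dual cones and orthogonal complements\<close>

lemma face_subset: "is_face \<sigma> \<gamma> \<Longrightarrow> \<gamma> \<subseteq> \<sigma>"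
  unfolding is_face_def by blast

lemma prim_ray_gen_in_cone: "P \<in> prim_ray_gens \<sigma> \<Longrightarrow> emb P \<in> \<sigma>"
  unfolding prim_ray_gens_def using face_subset generator_in_qcone by blast

lemma rat_poly_cone_eq_qcone_rays:
  fixes \<sigma> :: "(rat ^ 'n::finite) set"
  assumes cone: "rat_poly_cone \<sigma>" and sc: "strongly_convex \<sigma>"
  shows "\<sigma> = qcone (emb ` prim_ray_gens \<sigma>)"
proof -
  obtain R where R: "finite R" "\<sigma> = qcone (emb ` R)" using cone unfolding rat_poly_cone_def by blast
  obtain B where B: "B \<subseteq> emb ` R" "qcone B = \<sigma>" "\<forall>h\<in>B. h \<notin> qcone (B - {h})"
    using exists_irredundant_generators[of "emb ` R"] R by auto
  have fB: "finite B" using B(1) R(1) finite_subset by blast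
  have "h \<in> qcone (emb ` prim_ray_gens \<sigma>)" if h: "h \<in> B" for h
  proof -
    obtain \<rho> where \<rho>: "h = emb \<rho>" using h B(1) by auto
    have "h \<noteq> 0" using B(3) h zero_in_qcone by metis
    then obtain P d where Pd: "primitive P" "0 < d" "\<rho> = d *s P"
      using primitive_decomposition \<rho> emb_eq_0_iff by metis
    have hP: "h = of_int d *s emb P" using \<rho> Pd by (simp add: emb_scale)
    have "is_face \<sigma> (qcone {emb P})"
      using irredundant_generator_ray_face[OF fB _ B(3) h] B(2) sc hP
        qcone_single_scale[of "of_int d" "emb P"] Pd(2) by simp
    then have "P \<in> prim_ray_gens \<sigma>" using Pd(1) by (simp add: prim_ray_gens_def)
    then show ?thesis unfolding hP using Pd(2) by (intro qcone_scale generator_in_qcone) auto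
  qed
  then have "\<sigma> \<subseteq> qcone (emb ` prim_ray_gens \<sigma>)" using B(2) qcone_subset_qcone by blast
  moreover have "qcone (emb ` prim_ray_gens \<sigma>) \<subseteq> \<sigma>"
    using qcone_subset_qcone[of "emb ` prim_ray_gens \<sigma>" "emb ` R"] R(2) prim_ray_gen_in_cone by auto
  ultimately show ?thesis by blast
qed

lemma face_subset_qcone_rays:
  fixes \<sigma> :: "(rat ^ 'n::finite) set"
  assumes cone: "rat_poly_cone \<sigma>" and sc: "strongly_convex \<sigma>" and face: "is_face \<sigma> \<gamma>"
  shows "\<gamma> \<subseteq> qcone (emb ` {P \<in> prim_ray_gens \<sigma>. emb P \<in> \<gamma>})"
proof
  fix v assume v: "v \<in> \<gamma>"
  obtain m where m: "\<forall>v\<in>\<sigma>. 0 \<le> qdot v m" "\<gamma> = {v\<in>\<sigma>. qdot v m = 0}"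
    using face unfolding is_face_def by blast
  have "v \<in> qcone (emb ` prim_ray_gens \<sigma>)"
    using v m(2) rat_poly_cone_eq_qcone_rays[OF cone sc, THEN equalityD1] by blast
  then have "v \<in> qcone {a \<in> emb ` prim_ray_gens \<sigma>. qdot a m = 0}"
    using v m prim_ray_gen_in_cone by (intro qcone_inter_hyperplane) auto
  also have "{a \<in> emb ` prim_ray_gens \<sigma>. qdot a m = 0} = emb ` {P \<in> prim_ray_gens \<sigma>. emb P \<in> \<gamma>}"
    using m prim_ray_gen_in_cone by auto
  finally show "v \<in> qcone (emb ` {P \<in> prim_ray_gens \<sigma>. emb P \<in> \<gamma>})" .
qed

lemma Ssg_iff_ray_gens:
  fixes \<sigma> :: "(rat ^ 'n::finite) set"
  assumes cone: "rat_poly_cone \<sigma>" and sc: "strongly_convex \<sigma>"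
  shows "u \<in> Ssg \<sigma> \<longleftrightarrow> (\<forall>P\<in>prim_ray_gens \<sigma>. 0 \<le> ipair P u)"
proof
  assume "u \<in> Ssg \<sigma>"
  then show "\<forall>P\<in>prim_ray_gens \<sigma>. 0 \<le> ipair P u"
    using prim_ray_gen_in_cone by (fastforce simp: Ssg_def qdot_emb)
next
  assume rays: "\<forall>P\<in>prim_ray_gens \<sigma>. 0 \<le> ipair P u"
  have "0 \<le> qdot v (emb u)" if "v \<in> qcone (emb ` prim_ray_gens \<sigma>)" for v
    using that by (rule qcone_dual_nonneg) (use rays in \<open>auto simp: qdot_emb\<close>)
  then show "u \<in> Ssg \<sigma>"
    using rat_poly_cone_eq_qcone_rays[OF cone sc, THEN equalityD1] unfolding Ssg_def by blast
qed

lemma Ssg_antimono: "\<gamma> \<subseteq> \<sigma> \<Longrightarrow> Ssg \<sigma> \<subseteq> Ssg \<gamma>"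
  unfolding Ssg_def by blast

lemma Ssg_add: "u \<in> Ssg \<sigma> \<Longrightarrow> w \<in> Ssg \<sigma> \<Longrightarrow> u + w \<in> Ssg \<sigma>"
  by (simp add: Ssg_def emb_add qdot_add_right)

lemma Ssg_scale: "u \<in> Ssg \<sigma> \<Longrightarrow> 0 \<le> c \<Longrightarrow> c *s u \<in> Ssg \<sigma>"
  by (simp add: Ssg_def emb_scale qdot_scale_right)

lemma Ssg_zero: "0 \<in> Ssg \<sigma>"
  by (simp add: Ssg_def emb_def qdot_def)

lemma Ssg_sum: "(\<And>i. i \<in> I \<Longrightarrow> f i \<in> Ssg \<sigma>) \<Longrightarrow> (\<Sum>i\<in>I. f i) \<in> Ssg \<sigma>"
  by (induction I rule: infinite_finite_induct) (auto simp: Ssg_zero Ssg_add)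

lemma demazure_root_Ssg_face:
  fixes \<sigma> :: "(rat ^ 'n::finite) set"
  assumes cone: "rat_poly_cone \<sigma>" and sc: "strongly_convex \<sigma>" and face: "is_face \<sigma> \<gamma>"
    and root: "demazure_root \<sigma> p e" and p: "emb p \<notin> \<gamma>"
  shows "e \<in> Ssg \<gamma>"
  unfolding Ssg_def
proof (intro CollectI ballI)
  fix v assume "v \<in> \<gamma>"
  then have "v \<in> qcone (emb ` {P \<in> prim_ray_gens \<sigma>. emb P \<in> \<gamma>})"
    using face_subset_qcone_rays[OF cone sc face] by blast
  moreover have "0 \<le> qdot a (emb e)" if "a \<in> emb ` {P \<in> prim_ray_gens \<sigma>. emb P \<in> \<gamma>}" for a
    using that p root by (auto simp: demazure_root_def qdot_emb)
  ultimately show "0 \<le> qdot v (emb e)" by (rule qcone_dual_nonneg)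
qed

lemma prim_ray_gens_face:
  assumes face: "is_face \<sigma> \<tau>" and P: "P \<in> prim_ray_gens \<sigma>" and P_tau: "emb P \<in> \<tau>"
  shows "P \<in> prim_ray_gens \<tau>"
proof -
  obtain m where m: "\<forall>v\<in>\<sigma>. 0 \<le> qdot v m" "\<tau> = {v\<in>\<sigma>. qdot v m = 0}"
    using face unfolding is_face_def by blast
  obtain mP where mP: "\<forall>v\<in>\<sigma>. 0 \<le> qdot v mP" "qcone {emb P} = {v\<in>\<sigma>. qdot v mP = 0}"
    using P unfolding prim_ray_gens_def is_face_def by blast
  have "qcone {emb P} \<subseteq> \<tau>"
    using P_tau m(2) qcone_dual_zero[of _ "{emb P}" m] mP(2) by auto
  then have "qcone {emb P} = {v\<in>\<tau>. qdot v mP = 0}" using mP(2) m(2) by blast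
  moreover have "\<forall>v\<in>\<tau>. 0 \<le> qdot v mP" using mP(1) m(2) by blast
  ultimately have "is_face \<tau> (qcone {emb P})" unfolding is_face_def by blast
  then show ?thesis using P by (simp add: prim_ray_gens_def)
qed

lemma perp_add: "u \<in> perp \<gamma> \<Longrightarrow> w \<in> perp \<gamma> \<Longrightarrow> u + w \<in> perp \<gamma>"
  by (simp add: perp_def emb_add qdot_add_right)

lemma perp_scale: "u \<in> perp \<gamma> \<Longrightarrow> c *s u \<in> perp \<gamma>"
  by (simp add: perp_def emb_scale qdot_scale_right)

lemma perp_scale_iff: "c \<noteq> 0 \<Longrightarrow> c *s u \<in> perp \<gamma> \<longleftrightarrow> u \<in> perp \<gamma>"
  by (simp add: perp_def emb_scale qdot_scale_right)

lemma perp_zero: "0 \<in> perp \<gamma>"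
  by (simp add: perp_def emb_def qdot_def)

lemma perp_sum: "(\<And>i. i \<in> I \<Longrightarrow> f i \<in> perp \<gamma>) \<Longrightarrow> (\<Sum>i\<in>I. f i) \<in> perp \<gamma>"
  by (induction I rule: infinite_finite_induct) (auto simp: perp_zero perp_add)

lemma perp_Un: "perp (A \<union> B) = perp A \<inter> perp B"
  unfolding perp_def by blast

lemma perp_antimono: "A \<subseteq> B \<Longrightarrow> perp B \<subseteq> perp A"
  unfolding perp_def by blast

lemma perp_qcone: "perp (qcone A) = perp A"
  unfolding perp_def using generator_in_qcone qcone_dual_zero[of _ A] by blast

lemma perp_face_iff_ray_gens:
  fixes \<sigma> :: "(rat ^ 'n::finite) set"
  assumes cone: "rat_poly_cone \<sigma>" and sc: "strongly_convex \<sigma>" and face: "is_face \<sigma> \<tau>"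
  shows "u \<in> perp \<tau> \<longleftrightarrow> (\<forall>P\<in>prim_ray_gens \<tau>. ipair P u = 0)"
proof
  assume "u \<in> perp \<tau>"
  then show "\<forall>P\<in>prim_ray_gens \<tau>. ipair P u = 0"
    using prim_ray_gen_in_cone by (fastforce simp: perp_def qdot_emb)
next
  assume rays: "\<forall>P\<in>prim_ray_gens \<tau>. ipair P u = 0"
  have "\<tau> \<subseteq> qcone (emb ` {P \<in> prim_ray_gens \<sigma>. emb P \<in> \<tau>})"
    by (rule face_subset_qcone_rays[OF cone sc face])
  also have "\<dots> \<subseteq> qcone (emb ` prim_ray_gens \<tau>)"
    using prim_ray_gens_face[OF face] by (intro qcone_mono) blast
  moreover have "u \<in> perp (emb ` prim_ray_gens \<tau>)"
    using rays by (auto simp: perp_def qdot_emb)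
  ultimately show "u \<in> perp \<tau>" using perp_antimono perp_qcone by blast
qed

lemma perp_add_iff_Ssg:
  assumes "u \<in> Ssg \<gamma>" "w \<in> Ssg \<gamma>"
  shows "u + w \<in> perp \<gamma> \<longleftrightarrow> u \<in> perp \<gamma> \<and> w \<in> perp \<gamma>"
  using assms unfolding Ssg_def perp_def
  by (auto simp: emb_add qdot_add_right add_nonneg_eq_0_iff)

lemma perp_sum_iff_Ssg:
  assumes "finite I" "\<And>i. i \<in> I \<Longrightarrow> f i \<in> Ssg \<gamma>"
  shows "(\<Sum>i\<in>I. f i) \<in> perp \<gamma> \<longleftrightarrow> (\<forall>i\<in>I. f i \<in> perp \<gamma>)"
  using assms
  by (induction I rule: finite_induct) (auto simp: perp_zero perp_add_iff_Ssg Ssg_sum)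

lemma rat_vec_integral_multiple:
  fixes m :: "rat ^ 'n::finite"
  shows "\<exists>D u. 0 < D \<and> emb u = of_int D *s m"
proof -
  define den where "den i = snd (quotient_of (m $ i))" for i
  define num where "num i = fst (quotient_of (m $ i))" for i
  have den_pos: "0 < den i" for i by (simp add: den_def quotient_of_denom_pos')
  have m_eq: "m $ i = of_int (num i) / of_int (den i)" for i
    by (rule quotient_of_div) (simp add: num_def den_def)
  define D where "D = (\<Prod>i\<in>UNIV. den i)"
  define u where "u = (\<chi> i. (\<Prod>j\<in>UNIV-{i}. den j) * num i)"
  have "of_int ((\<Prod>j\<in>UNIV-{i}. den j) * num i) = (of_int D * m $ i :: rat)" for i
  proof -
    have "D = den i * (\<Prod>j\<in>UNIV-{i}. den j)" unfolding D_def by (simp add: prod.remove)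
    then show ?thesis using den_pos[of i] by (simp add: m_eq)
  qed
  then have "emb u = of_int D *s m" by (simp add: emb_def u_def vec_eq_iff)
  moreover have "0 < D" using den_pos by (simp add: D_def prod_pos)
  ultimately show ?thesis by blast
qed

lemma face_exists_Ssg_perp_positive:
  fixes \<sigma> :: "(rat ^ 'n::finite) set"
  assumes face: "is_face \<sigma> \<gamma>" and q: "emb q \<in> \<sigma>" "emb q \<notin> \<gamma>"
  shows "\<exists>u. u \<in> Ssg \<sigma> \<and> u \<in> perp \<gamma> \<and> 0 < ipair q u"
proof -
  obtain m where m: "\<forall>v\<in>\<sigma>. 0 \<le> qdot v m" "\<gamma> = {v\<in>\<sigma>. qdot v m = 0}"
    using face unfolding is_face_def by blast
  obtain D u where Du: "0 < D" "emb u = of_int D *s m" using rat_vec_integral_multiple by blast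
  have "u \<in> Ssg \<sigma>" using m(1) Du by (simp add: Ssg_def qdot_scale_right)
  moreover have "u \<in> perp \<gamma>" using m(2) Du by (simp add: perp_def qdot_scale_right)
  moreover have "0 < qdot (emb q) m" using q m by (simp add: order_less_le)
  then have "(0::rat) < of_int (ipair q u)" using Du by (simp flip: qdot_emb add: qdot_scale_right)
  ultimately show ?thesis by auto
qed

section \<open>Idempotents of the root monoid\<close>

lemma orbit_nonzero_iff: "x \<in> orbit \<sigma> \<gamma> \<Longrightarrow> u \<in> Ssg \<sigma> \<Longrightarrow> x u \<noteq> 0 \<longleftrightarrow> u \<in> perp \<gamma>"
  unfolding orbit_def by blast

lemma orbit_outside: "x \<in> orbit \<sigma> \<gamma> \<Longrightarrow> u \<notin> Ssg \<sigma> \<Longrightarrow> x u = 0"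
  unfolding orbit_def Xpts_def by blast

lemma orbit_nonzero_imp: "x \<in> orbit \<sigma> \<gamma> \<Longrightarrow> x u \<noteq> 0 \<Longrightarrow> u \<in> Ssg \<sigma> \<and> u \<in> perp \<gamma>"
  using orbit_nonzero_iff orbit_outside by blast

lemma orbit_mult: "x \<in> orbit \<sigma> \<gamma> \<Longrightarrow> u \<in> Ssg \<sigma> \<Longrightarrow> w \<in> Ssg \<sigma> \<Longrightarrow> x (u + w) = x u * x w"
  unfolding orbit_def Xpts_def by blast

lemma xpt_in_orbit:
  assumes "\<gamma> \<subseteq> \<sigma>"
  shows "xpt \<sigma> \<gamma> \<in> orbit \<sigma> \<gamma>"
proof -
  have "u + w \<in> perp \<gamma> \<longleftrightarrow> u \<in> perp \<gamma> \<and> w \<in> perp \<gamma>" if "u \<in> Ssg \<sigma>" "w \<in> Ssg \<sigma>" for u w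
    using that Ssg_antimono[OF assms] by (intro perp_add_iff_Ssg) auto
  then show ?thesis
    unfolding orbit_def Xpts_def xpt_def by (auto simp: Ssg_zero perp_zero Ssg_add)
qed

lemma orbit_eq_xpt_iff:
  assumes "\<gamma> \<subseteq> \<sigma>" and x: "x \<in> orbit \<sigma> \<gamma>"
  shows "x = xpt \<sigma> \<gamma> \<longleftrightarrow> (\<forall>u\<in>Ssg \<sigma> \<inter> perp \<gamma>. x u = 1)"
proof
  assume "\<forall>u\<in>Ssg \<sigma> \<inter> perp \<gamma>. x u = 1"
  then show "x = xpt \<sigma> \<gamma>"
    using orbit_nonzero_iff[OF x] orbit_outside[OF x] by (auto simp: xpt_def fun_eq_iff)
qed (simp add: xpt_def)

lemma PiE_atMost_indicator:
  assumes "r \<in> I"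
  shows "PiE I (\<lambda>t. {..(if t = r then 1 else 0::nat)})
       = {restrict (\<lambda>_. 0) I, restrict (\<lambda>t. if t = r then 1 else 0) I}"
proof (intro equalityI subsetI)
  fix g assume g: "g \<in> PiE I (\<lambda>t. {..(if t = r then 1 else 0::nat)})"
  then have "g = restrict (\<lambda>t. if t = r then g r else 0) I"
    by (auto simp: PiE_iff extensional_def fun_eq_iff)
  moreover have "g r = 0 \<or> g r = 1" using g assms by (auto simp: PiE_iff)
  ultimately show "g \<in> {restrict (\<lambda>_. 0) I, restrict (\<lambda>t. if t = r then 1 else 0) I}"
    by (auto simp: if_distrib cong: if_cong)
qed (use assms in auto)

locale root_monoid =
  fixes \<sigma> \<gamma> :: "(rat ^ 'n::finite) set"
    and p e1 e2 :: "nat \<Rightarrow> int ^ 'n"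
    and k :: nat
  assumes cone: "rat_poly_cone \<sigma>" and sc: "strongly_convex \<sigma>"
    and gamma_face: "is_face \<sigma> \<gamma>"
    and roots: "\<forall>r<k. demazure_root \<sigma> (p r) (e1 r) \<and> demazure_root \<sigma> (p r) (e2 r)"
    and compat: "\<forall>r<k. \<forall>s<k. ipair (p s) (e1 r) = (if r = s then -1 else 0)
                             \<and> ipair (p s) (e2 r) = (if r = s then -1 else 0)"
begin

abbreviation pdeg :: "int ^ 'n \<Rightarrow> nat \<Rightarrow> nat" where
  "pdeg u r \<equiv> nat (ipair (p r) u)"

definition shift :: "int ^ 'n \<Rightarrow> (nat \<Rightarrow> nat) \<Rightarrow> (nat \<Rightarrow> nat) \<Rightarrow> int ^ 'n" where
  "shift u a b = u + (\<Sum>r<k. int (a r) *s e2 r) + (\<Sum>r<k. int (b r) *s e1 r)"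

definition mul_term :: "(int ^ 'n \<Rightarrow> 'k::field) \<Rightarrow> (int ^ 'n \<Rightarrow> 'k) \<Rightarrow> int ^ 'n \<Rightarrow> (nat \<Rightarrow> nat) \<Rightarrow> 'k" where
  "mul_term x y u i = (\<Prod>r<k. of_nat (pdeg u r choose i r))
     * x (shift u i (\<lambda>_. 0)) * y (shift u (\<lambda>_. 0) (\<lambda>r. pdeg u r - i r))"

lemma rmul_apply:
  "u \<in> Ssg \<sigma> \<Longrightarrow> rmul \<sigma> p e1 e2 k x y u = (\<Sum>i \<in> PiE {..<k} (\<lambda>r. {..pdeg u r}). mul_term x y u i)"
  by (simp add: rmul_def mul_term_def shift_def)

lemma rmul_outside: "u \<notin> Ssg \<sigma> \<Longrightarrow> rmul \<sigma> p e1 e2 k x y u = 0"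
  by (simp add: rmul_def)

lemma shift_cong:
  "(\<And>t. t < k \<Longrightarrow> a t = a' t) \<Longrightarrow> (\<And>t. t < k \<Longrightarrow> b t = b' t) \<Longrightarrow> shift u a b = shift u a' b'"
  unfolding shift_def by (metis (no_types, lifting) lessThan_iff sum.cong)

lemma shift_zero [simp]: "shift u (\<lambda>_. 0) (\<lambda>_. 0) = u"
  by (simp add: shift_def)

lemma p_ray_gen: "r < k \<Longrightarrow> p r \<in> prim_ray_gens \<sigma>"
  using roots unfolding demazure_root_def by blast

lemma ipair_p_nonneg: "u \<in> Ssg \<sigma> \<Longrightarrow> r < k \<Longrightarrow> 0 \<le> ipair (p r) u"
  using Ssg_iff_ray_gens[OF cone sc] p_ray_gen by auto

lemma ipair_p_perp: "u \<in> perp \<gamma> \<Longrightarrow> emb (p r) \<in> \<gamma> \<Longrightarrow> ipair (p r) u = 0"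
  unfolding perp_def by (auto simp: qdot_emb)

lemma ipair_shift:
  assumes "t < k"
  shows "ipair (p t) (shift u a b) = ipair (p t) u - int (a t) - int (b t)"
proof -
  have "ipair (p t) (\<Sum>r<k. int (a r) *s e2 r) = - int (a t)"
    using compat assms by (intro ipair_sum_dual_family) auto
  moreover have "ipair (p t) (\<Sum>r<k. int (b r) *s e1 r) = - int (b t)"
    using compat assms by (intro ipair_sum_dual_family) auto
  ultimately show ?thesis by (simp add: shift_def ipair_add_right)
qed

lemma shift_in_Ssg:
  assumes u: "u \<in> Ssg \<sigma>" and le: "\<forall>t<k. a t + b t \<le> pdeg u t"
  shows "shift u a b \<in> Ssg \<sigma>"
  unfolding Ssg_iff_ray_gens[OF cone sc]
proof
  fix P assume P: "P \<in> prim_ray_gens \<sigma>"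
  show "0 \<le> ipair P (shift u a b)"
  proof (cases "P \<in> p ` {..<k}")
    case True
    then obtain t where t: "t < k" "P = p t" by auto
    have "int (a t + b t) \<le> int (pdeg u t)" using le t by (simp only: of_nat_le_iff)
    also have "int (pdeg u t) = ipair (p t) u" using ipair_p_nonneg[OF u t(1)] by simp
    finally show ?thesis using t by (simp add: ipair_shift)
  next
    case False
    then have roots_nonneg: "0 \<le> ipair P (e1 r) \<and> 0 \<le> ipair P (e2 r)" if "r < k" for r
      using P roots that unfolding demazure_root_def by force
    have "0 \<le> ipair P u" using Ssg_iff_ray_gens[OF cone sc] u P by blast
    then show ?thesis
      unfolding shift_def ipair_add_right ipair_sum_right ipair_scale_right
      by (intro add_nonneg_nonneg sum_nonneg mult_nonneg_nonneg) (auto dest: roots_nonneg)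
  qed
qed

lemma shift_in_perp:
  assumes "u \<in> perp \<gamma>" "\<forall>t<k. 0 < a t \<longrightarrow> e2 t \<in> perp \<gamma>" "\<forall>t<k. 0 < b t \<longrightarrow> e1 t \<in> perp \<gamma>"
  shows "shift u a b \<in> perp \<gamma>"
proof -
  have "int n *s f \<in> perp \<gamma>" if "0 < n \<longrightarrow> f \<in> perp \<gamma>" for n :: nat and f
    using that by (cases "n = 0") (auto simp: perp_scale perp_zero)
  then show ?thesis
    unfolding shift_def using assms by (intro perp_add perp_sum) auto
qed

lemma shift_perp_iff:
  assumes u: "u \<in> Ssg \<sigma>" and off: "\<forall>t<k. 0 < a t \<or> 0 < b t \<longrightarrow> emb (p t) \<notin> \<gamma>"
  shows "shift u a b \<in> perp \<gamma> \<longleftrightarrow>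
    u \<in> perp \<gamma> \<and> (\<forall>t<k. 0 < a t \<longrightarrow> e2 t \<in> perp \<gamma>) \<and> (\<forall>t<k. 0 < b t \<longrightarrow> e1 t \<in> perp \<gamma>)"
proof -
  have root_Ssg: "int n *s f \<in> Ssg \<gamma>"
    if "0 < n \<longrightarrow> emb q \<notin> \<gamma>" "demazure_root \<sigma> q f" for n :: nat and q f
  proof (cases "n = 0")
    case False
    then have "f \<in> Ssg \<gamma>" using that demazure_root_Ssg_face[OF cone sc gamma_face] by auto
    then show ?thesis by (rule Ssg_scale) simp
  qed (simp add: Ssg_zero)
  have S2: "int (a t) *s e2 t \<in> Ssg \<gamma>" if "t \<in> {..<k}" for t
    using that off roots by (intro root_Ssg[of "a t" "p t"]) auto
  have S1: "int (b t) *s e1 t \<in> Ssg \<gamma>" if "t \<in> {..<k}" for t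
    using that off roots by (intro root_Ssg[of "b t" "p t"]) auto
  have Su: "u \<in> Ssg \<gamma>" using u Ssg_antimono[OF face_subset[OF gamma_face]] by blast
  have term_perp: "int n *s f \<in> perp \<gamma> \<longleftrightarrow> (0 < n \<longrightarrow> f \<in> perp \<gamma>)" for n :: nat and f
    by (cases "n = 0") (auto simp: perp_scale_iff perp_zero)
  have "shift u a b \<in> perp \<gamma> \<longleftrightarrow> u \<in> perp \<gamma>
      \<and> (\<Sum>r<k. int (a r) *s e2 r) \<in> perp \<gamma> \<and> (\<Sum>r<k. int (b r) *s e1 r) \<in> perp \<gamma>"
    unfolding shift_def
    using Su Ssg_sum[of "{..<k}" "\<lambda>r. int (b r) *s e1 r", OF S1]
      Ssg_sum[of "{..<k}" "\<lambda>r. int (a r) *s e2 r", OF S2]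
    by (simp add: perp_add_iff_Ssg Ssg_add)
  also have "\<dots> \<longleftrightarrow>
    u \<in> perp \<gamma> \<and> (\<forall>t<k. 0 < a t \<longrightarrow> e2 t \<in> perp \<gamma>) \<and> (\<forall>t<k. 0 < b t \<longrightarrow> e1 t \<in> perp \<gamma>)"
    using perp_sum_iff_Ssg[of "{..<k}" "\<lambda>r. int (b r) *s e1 r", OF _ S1]
      perp_sum_iff_Ssg[of "{..<k}" "\<lambda>r. int (a r) *s e2 r", OF _ S2]
    by (auto simp: term_perp)
  finally show ?thesis .
qed

lemma mul_term_nonzero_support:
  fixes x :: "int ^ 'n \<Rightarrow> 'k::field"
  assumes x: "x \<in> orbit \<sigma> \<gamma>" and u: "u \<in> Ssg \<sigma>" and i: "\<forall>t<k. i t \<le> pdeg u t"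
    and nz: "mul_term x x u i \<noteq> 0"
  shows "u \<in> perp \<gamma> \<and> (\<forall>t<k. 0 < i t \<longrightarrow> e2 t \<in> perp \<gamma>) \<and> (\<forall>t<k. i t < pdeg u t \<longrightarrow> e1 t \<in> perp \<gamma>)"
proof -
  define j where "j = (\<lambda>t. pdeg u t - i t)"
  have a: "shift u i (\<lambda>_. 0) \<in> perp \<gamma>" and b: "shift u (\<lambda>_. 0) j \<in> perp \<gamma>"
    using nz orbit_nonzero_imp[OF x] by (auto simp: mul_term_def j_def)
  have off: "\<forall>t<k. 0 < i t \<or> 0 < j t \<longrightarrow> emb (p t) \<notin> \<gamma>"
  proof (intro allI impI notI)
    fix t assume t: "t < k" "0 < i t \<or> 0 < j t" and "emb (p t) \<in> \<gamma>"
    then have "ipair (p t) (shift u i (\<lambda>_. 0)) = 0" "ipair (p t) (shift u (\<lambda>_. 0) j) = 0"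
      using a b ipair_p_perp by blast+
    then have "ipair (p t) u = int (i t)" "ipair (p t) u = int (j t)"
      using t(1) by (simp_all add: ipair_shift)
    moreover have "int (j t) = ipair (p t) u - int (i t)"
      using i t(1) ipair_p_nonneg[OF u t(1)] by (simp add: j_def of_nat_diff)
    ultimately have "i t = 0" "j t = 0" by linarith+
    then show False using t(2) by simp
  qed
  have "u \<in> perp \<gamma> \<and> (\<forall>t<k. 0 < i t \<longrightarrow> e2 t \<in> perp \<gamma>)"
    using a shift_perp_iff[OF u, of i "\<lambda>_. 0"] off by auto
  moreover have "\<forall>t<k. 0 < j t \<longrightarrow> e1 t \<in> perp \<gamma>"
    using b shift_perp_iff[OF u, of "\<lambda>_. 0" j] off by auto
  ultimately show ?thesis by (simp add: j_def)
qed

lemma rmul_apply_degree_zero: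
  assumes u: "u \<in> Ssg \<sigma>" and z: "\<forall>s<k. ipair (p s) u = 0"
  shows "rmul \<sigma> p e1 e2 k x y u = x u * y u"
proof -
  define i0 where "i0 = restrict (\<lambda>_. 0::nat) {..<k}"
  have "PiE {..<k} (\<lambda>r. {..pdeg u r}) = PiE {..<k} (\<lambda>r. {i0 r})"
    using z by (intro PiE_cong) (auto simp: i0_def)
  also have "\<dots> = {i0}" by (rule PiE_singleton) (unfold i0_def, rule restrict_extensional)
  finally have index: "PiE {..<k} (\<lambda>r. {..pdeg u r}) = {i0}" .
  have "shift u i0 (\<lambda>_. 0) = u" "shift u (\<lambda>_. 0) (\<lambda>r. pdeg u r - i0 r) = u"
    using z by (auto simp: i0_def intro!: trans[OF shift_cong shift_zero])
  then show ?thesis using u by (simp add: rmul_apply index mul_term_def i0_def)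
qed

lemma idempotent_eq_1:
  fixes x :: "int ^ 'n \<Rightarrow> 'k::field"
  assumes x: "x \<in> orbit \<sigma> \<gamma>" and idem: "rmul \<sigma> p e1 e2 k x x = x"
    and u: "u \<in> Ssg \<sigma>" "u \<in> perp \<gamma>" and z: "\<forall>s<k. ipair (p s) u = 0"
  shows "x u = 1"
proof -
  have "x u * x u = x u" using rmul_apply_degree_zero[OF u(1) z, of x x] idem by simp
  moreover have "x u \<noteq> 0" using orbit_nonzero_iff[OF x u(1)] u(2) by blast
  ultimately show ?thesis by (metis mult_cancel_right2)
qed

lemma rmul_vanishes_off_perp:
  fixes x :: "int ^ 'n \<Rightarrow> 'k::field"
  assumes x: "x \<in> orbit \<sigma> \<gamma>" and u: "u \<in> Ssg \<sigma>" "u \<notin> perp \<gamma>"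
  shows "rmul \<sigma> p e1 e2 k x x u = 0"
  unfolding rmul_apply[OF u(1)]
proof (intro sum.neutral ballI)
  fix i assume "i \<in> PiE {..<k} (\<lambda>r. {..pdeg u r})"
  then have "\<forall>t<k. i t \<le> pdeg u t" by (auto simp: PiE_iff)
  then show "mul_term x x u i = 0" using mul_term_nonzero_support[OF x u(1)] u(2) by blast
qed

lemma idempotent_root_perp:
  fixes x :: "int ^ 'n \<Rightarrow> 'k::field"
  assumes x: "x \<in> orbit \<sigma> \<gamma>" and idem: "rmul \<sigma> p e1 e2 k x x = x"
    and t: "t < k" "emb (p t) \<notin> \<gamma>"
  shows "e1 t \<in> perp \<gamma> \<or> e2 t \<in> perp \<gamma>"
proof -
  obtain u where u: "u \<in> Ssg \<sigma>" "u \<in> perp \<gamma>" "0 < ipair (p t) u"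
    using face_exists_Ssg_perp_positive[OF gamma_face prim_ray_gen_in_cone[OF p_ray_gen[OF t(1)]] t(2)]
    by blast
  have "rmul \<sigma> p e1 e2 k x x u \<noteq> 0" using idem orbit_nonzero_iff[OF x u(1)] u(2) by simp
  then obtain i where i: "i \<in> PiE {..<k} (\<lambda>r. {..pdeg u r})" and nz: "mul_term x x u i \<noteq> 0"
    unfolding rmul_apply[OF u(1)] using sum.not_neutral_contains_not_neutral by blast
  have "\<forall>t<k. i t \<le> pdeg u t" using i by (auto simp: PiE_iff)
  then have "(0 < i t \<longrightarrow> e2 t \<in> perp \<gamma>) \<and> (i t < pdeg u t \<longrightarrow> e1 t \<in> perp \<gamma>)"
    using mul_term_nonzero_support[OF x u(1) _ nz] t(1) by blast
  then show ?thesis using u(3) by (cases "i t = 0") auto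
qed

lemma idempotent_exists_unit_degree:
  fixes x :: "int ^ 'n \<Rightarrow> 'k::field"
  assumes x: "x \<in> orbit \<sigma> \<gamma>" and idem: "rmul \<sigma> p e1 e2 k x x = x"
    and r: "r < k" "emb (p r) \<notin> \<gamma>"
  shows "\<exists>w. w \<in> Ssg \<sigma> \<and> w \<in> perp \<gamma> \<and> (\<forall>t<k. ipair (p t) w = (if t = r then 1 else 0))"
proof -
  obtain u where u: "u \<in> Ssg \<sigma>" "u \<in> perp \<gamma>" "0 < ipair (p r) u"
    using face_exists_Ssg_perp_positive[OF gamma_face prim_ray_gen_in_cone[OF p_ray_gen[OF r(1)]] r(2)]
    by blast
  define d where "d t = pdeg u t - (if t = r then 1 else 0)" for t
  define a where "a t = (if e2 t \<in> perp \<gamma> then d t else 0)" for t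
  define b where "b t = (if e2 t \<in> perp \<gamma> then 0 else d t)" for t
  have ab: "a t + b t = d t" for t by (simp add: a_def b_def)
  have "shift u a b \<in> Ssg \<sigma>" by (intro shift_in_Ssg[OF u(1)]) (simp add: ab d_def)
  moreover have "shift u a b \<in> perp \<gamma>"
  proof (rule shift_in_perp[OF u(2)])
    show "\<forall>t<k. 0 < a t \<longrightarrow> e2 t \<in> perp \<gamma>" by (simp add: a_def)
    show "\<forall>t<k. 0 < b t \<longrightarrow> e1 t \<in> perp \<gamma>"
    proof (intro allI impI)
      fix t assume t: "t < k" "0 < b t"
      then have "e2 t \<notin> perp \<gamma>" "ipair (p t) u \<noteq> 0" by (auto simp: b_def d_def split: if_splits)
      moreover from this(2) have "emb (p t) \<notin> \<gamma>" using ipair_p_perp[OF u(2)] by blast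
      ultimately show "e1 t \<in> perp \<gamma>" using idempotent_root_perp[OF x idem t(1)] by blast
    qed
  qed
  moreover have "ipair (p t) (shift u a b) = (if t = r then 1 else 0)" if t: "t < k" for t
  proof -
    have "1 \<le> pdeg u r" using u(3) by simp
    then have "int (d t) = ipair (p t) u - (if t = r then 1 else 0)"
      using ipair_p_nonneg[OF u(1) t] by (auto simp: d_def of_nat_diff)
    moreover have "int (a t) + int (b t) = int (d t)" using ab[of t] by (metis of_nat_add)
    ultimately show ?thesis using t by (simp add: ipair_shift)
  qed
  ultimately show ?thesis by blast
qed

lemma shift_indicator:
  assumes "r < k"
  shows "shift w (\<lambda>_. 0) (\<lambda>t. if t = r then 1 else 0) = w + e1 r"
    and "shift w (\<lambda>t. if t = r then 1 else 0) (\<lambda>_. 0) = w + e2 r"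
proof -
  have "(\<Sum>t<k. int (if t = r then 1 else 0) *s f t) = f r" for f :: "nat \<Rightarrow> int ^ 'n"
  proof -
    have "(\<Sum>t<k. int (if t = r then 1 else 0) *s f t) = (\<Sum>t<k. if t = r then f t else 0)"
      by (intro sum.cong) auto
    then show ?thesis using assms by simp
  qed
  then show "shift w (\<lambda>_. 0) (\<lambda>t. if t = r then 1 else 0) = w + e1 r"
    and "shift w (\<lambda>t. if t = r then 1 else 0) (\<lambda>_. 0) = w + e2 r"
    by (simp_all add: shift_def)
qed

lemma rmul_apply_unit_degree:
  fixes x y :: "int ^ 'n \<Rightarrow> 'k::field"
  assumes w: "w \<in> Ssg \<sigma>" and r: "r < k" and deg: "\<forall>t<k. ipair (p t) w = (if t = r then 1 else 0)"
  shows "rmul \<sigma> p e1 e2 k x y w = x w * y (w + e1 r) + x (w + e2 r) * y w"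
proof -
  define \<delta> where "\<delta> = (\<lambda>t. if t = r then 1 else 0 :: nat)"
  define i0 where "i0 = restrict (\<lambda>_. 0::nat) {..<k}"
  define i1 where "i1 = restrict \<delta> {..<k}"
  have pdeg_w: "pdeg w t = \<delta> t" if "t < k" for t using deg that by (simp add: \<delta>_def)
  have "PiE {..<k} (\<lambda>t. {..pdeg w t}) = PiE {..<k} (\<lambda>t. {..\<delta> t})"
    using pdeg_w by (intro PiE_cong) simp
  also have "\<dots> = {i0, i1}" unfolding i0_def i1_def \<delta>_def using r by (intro PiE_atMost_indicator) simp
  finally have index: "PiE {..<k} (\<lambda>t. {..pdeg w t}) = {i0, i1}" .
  have "i0 r \<noteq> i1 r" using r by (simp add: i0_def i1_def \<delta>_def)
  then have distinct: "i0 \<noteq> i1" by blast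
  have "mul_term x y w i0 = x w * y (w + e1 r)"
  proof -
    have "(\<Prod>t<k. of_nat (pdeg w t choose i0 t)) = (1::'k)" by (intro prod.neutral) (simp add: i0_def)
    moreover have "shift w i0 (\<lambda>_. 0) = w" by (rule trans[OF shift_cong shift_zero]) (simp_all add: i0_def)
    moreover have "shift w (\<lambda>_. 0) (\<lambda>t. pdeg w t - i0 t) = w + e1 r"
      unfolding shift_indicator(1)[OF r, symmetric] by (rule shift_cong) (simp_all add: i0_def pdeg_w \<delta>_def)
    ultimately show ?thesis by (simp add: mul_term_def)
  qed
  moreover have "mul_term x y w i1 = x (w + e2 r) * y w"
  proof -
    have "(\<Prod>t<k. of_nat (pdeg w t choose i1 t)) = (1::'k)" by (intro prod.neutral) (simp add: i1_def pdeg_w)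
    moreover have "shift w (\<lambda>_. 0) (\<lambda>t. pdeg w t - i1 t) = w"
      by (rule trans[OF shift_cong shift_zero]) (simp_all add: i1_def pdeg_w)
    moreover have "shift w i1 (\<lambda>_. 0) = w + e2 r"
      unfolding shift_indicator(2)[OF r, symmetric] by (rule shift_cong) (simp_all add: i1_def \<delta>_def)
    ultimately show ?thesis by (simp add: mul_term_def)
  qed
  ultimately show ?thesis using distinct by (simp add: rmul_apply[OF w] index)
qed

text \<open>At a character \<open>w\<close> of degree one in the ray \<open>p r\<close>, the product \<open>x * x\<close> has two terms,
  and both roots being orthogonal to \<open>\<gamma>\<close> makes each of them equal to \<open>x w\<close>.\<close>

lemma idempotent_not_both_roots_perp:
  fixes x :: "int ^ 'n \<Rightarrow> 'k::field"
  assumes x: "x \<in> orbit \<sigma> \<gamma>" and idem: "rmul \<sigma> p e1 e2 k x x = x"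
    and r: "r < k" "emb (p r) \<notin> \<gamma>" and e: "e1 r \<in> perp \<gamma>" "e2 r \<in> perp \<gamma>"
  shows False
proof -
  obtain w where w: "w \<in> Ssg \<sigma>" "w \<in> perp \<gamma>" and deg: "\<forall>t<k. ipair (p t) w = (if t = r then 1 else 0)"
    using idempotent_exists_unit_degree[OF x idem r] by blast
  define \<delta> where "\<delta> = (\<lambda>t. if t = r then 1 else 0 :: nat)"
  have shifted_one: "x (shift w a b) = 1" if ab: "\<forall>t<k. a t + b t = \<delta> t" for a b
  proof (rule idempotent_eq_1[OF x idem])
    show "shift w a b \<in> Ssg \<sigma>" using w(1) ab deg by (intro shift_in_Ssg) (auto simp: \<delta>_def)
    show "shift w a b \<in> perp \<gamma>"
    proof (rule shift_in_perp[OF w(2)])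
      have "t = r" if "t < k" "0 < a t \<or> 0 < b t" for t
        using that ab[rule_format, OF that(1)] by (auto simp: \<delta>_def split: if_splits)
      then show "\<forall>t<k. 0 < a t \<longrightarrow> e2 t \<in> perp \<gamma>" "\<forall>t<k. 0 < b t \<longrightarrow> e1 t \<in> perp \<gamma>"
        using e by auto
    qed
    show "\<forall>s<k. ipair (p s) (shift w a b) = 0"
    proof (intro allI impI)
      fix s assume s: "s < k"
      have "int (a s) + int (b s) = int (\<delta> s)" using ab s by (metis of_nat_add)
      moreover have "ipair (p s) (shift w a b) = ipair (p s) w - (int (a s) + int (b s))"
        using s by (simp add: ipair_shift)
      ultimately show "ipair (p s) (shift w a b) = 0" using deg s by (simp add: \<delta>_def)
    qed
  qed
  have "x (w + e1 r) = 1" "x (w + e2 r) = 1"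
    using shifted_one[of "\<lambda>_. 0" \<delta>] shifted_one[of \<delta> "\<lambda>_. 0"]
    unfolding \<delta>_def shift_indicator[OF r(1)] by simp_all
  then have "x w = x w + x w" using rmul_apply_unit_degree[OF w(1) r(1) deg, of x x] idem by simp
  then have "x w = 0" by (metis add_cancel_right_right)
  then show False using orbit_nonzero_iff[OF x w(1)] w(2) by blast
qed

definition canonical_index :: "int ^ 'n \<Rightarrow> nat \<Rightarrow> nat" where
  "canonical_index u = restrict (\<lambda>t. if e2 t \<in> perp \<gamma> then pdeg u t else 0) {..<k}"

lemma mul_term_nonzero_canonical:
  fixes x :: "int ^ 'n \<Rightarrow> 'k::field"
  assumes one: "\<forall>t<k. emb (p t) \<notin> \<gamma> \<longrightarrow> (e1 t \<in> perp \<gamma> \<longleftrightarrow> e2 t \<notin> perp \<gamma>)"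
    and x: "x \<in> orbit \<sigma> \<gamma>" and u: "u \<in> Ssg \<sigma>" and i: "i \<in> PiE {..<k} (\<lambda>t. {..pdeg u t})"
    and nz: "mul_term x x u i \<noteq> 0"
  shows "i = canonical_index u"
proof
  fix t
  have ile: "\<forall>t<k. i t \<le> pdeg u t" using i by (auto simp: PiE_iff)
  note support = mul_term_nonzero_support[OF x u ile nz]
  show "i t = canonical_index u t"
  proof (cases "t < k")
    case False
    then show ?thesis using i by (auto simp: canonical_index_def PiE_iff extensional_def)
  next
    case t: True
    have i_le: "i t \<le> pdeg u t" and e2_perp: "0 < i t \<longrightarrow> e2 t \<in> perp \<gamma>"
      and e1_perp: "i t < pdeg u t \<longrightarrow> e1 t \<in> perp \<gamma>"
      using support ile t by blast+
    show ?thesis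
    proof (cases "emb (p t) \<in> \<gamma>")
      case True
      then have "pdeg u t = 0" using ipair_p_perp support by simp
      then show ?thesis using i_le t by (simp add: canonical_index_def)
    next
      case False
      then have "e1 t \<in> perp \<gamma> \<longleftrightarrow> e2 t \<notin> perp \<gamma>" using one t by blast
      then show ?thesis using i_le e1_perp e2_perp t by (auto simp: canonical_index_def)
    qed
  qed
qed

lemma canonical_shift_degree_zero:
  assumes one: "\<forall>t<k. emb (p t) \<notin> \<gamma> \<longrightarrow> (e1 t \<in> perp \<gamma> \<longleftrightarrow> e2 t \<notin> perp \<gamma>)"
    and u: "u \<in> Ssg \<sigma>" "u \<in> perp \<gamma>"
  defines "c \<equiv> shift u (canonical_index u) (\<lambda>t. pdeg u t - canonical_index u t)"
  shows "c \<in> Ssg \<sigma> \<inter> perp \<gamma>" and "\<forall>s<k. ipair (p s) c = 0"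
proof -
  define a where "a = canonical_index u"
  define b where "b = (\<lambda>t. pdeg u t - a t)"
  have ab: "a t + b t = pdeg u t" if "t < k" for t using that by (simp add: a_def b_def canonical_index_def)
  have "shift u a b \<in> Ssg \<sigma>" using ab by (intro shift_in_Ssg[OF u(1)]) simp
  moreover have "shift u a b \<in> perp \<gamma>"
  proof (rule shift_in_perp[OF u(2)])
    show "\<forall>t<k. 0 < a t \<longrightarrow> e2 t \<in> perp \<gamma>" by (simp add: a_def canonical_index_def)
    show "\<forall>t<k. 0 < b t \<longrightarrow> e1 t \<in> perp \<gamma>"
    proof (intro allI impI)
      fix t assume t: "t < k" "0 < b t"
      then have "e2 t \<notin> perp \<gamma>" "ipair (p t) u \<noteq> 0"
        by (auto simp: b_def a_def canonical_index_def split: if_splits)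
      moreover from this(2) have "emb (p t) \<notin> \<gamma>" using ipair_p_perp[OF u(2)] by blast
      ultimately show "e1 t \<in> perp \<gamma>" using one t(1) by blast
    qed
  qed
  moreover have "\<forall>s<k. ipair (p s) (shift u a b) = 0"
  proof (intro allI impI)
    fix s assume s: "s < k"
    have "int (a s) + int (b s) = int (pdeg u s)" using ab[OF s] by (metis of_nat_add)
    then show "ipair (p s) (shift u a b) = 0" using s ipair_p_nonneg[OF u(1) s] by (simp add: ipair_shift)
  qed
  ultimately show "c \<in> Ssg \<sigma> \<inter> perp \<gamma>" and "\<forall>s<k. ipair (p s) c = 0"
    unfolding c_def a_def b_def by blast+
qed

lemma mul_term_canonical:
  fixes x :: "int ^ 'n \<Rightarrow> 'k::field"
  assumes one: "\<forall>t<k. emb (p t) \<notin> \<gamma> \<longrightarrow> (e1 t \<in> perp \<gamma> \<longleftrightarrow> e2 t \<notin> perp \<gamma>)"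
    and x: "x \<in> orbit \<sigma> \<gamma>"
    and x_one: "\<forall>w\<in>Ssg \<sigma> \<inter> perp \<gamma>. (\<forall>s<k. ipair (p s) w = 0) \<longrightarrow> x w = 1"
    and u: "u \<in> Ssg \<sigma>" "u \<in> perp \<gamma>"
  shows "mul_term x x u (canonical_index u) = x u"
proof -
  define a where "a = canonical_index u"
  define b where "b = (\<lambda>t. pdeg u t - a t)"
  have "a t \<le> pdeg u t" "b t \<le> pdeg u t" if "t < k" for t
    using that by (auto simp: a_def b_def canonical_index_def)
  then have a_Ssg: "shift u a (\<lambda>_. 0) \<in> Ssg \<sigma>" and b_Ssg: "shift u (\<lambda>_. 0) b \<in> Ssg \<sigma>"
    by (auto intro!: shift_in_Ssg[OF u(1)])
  have c: "shift u a b \<in> Ssg \<sigma>" "x (shift u a b) = 1"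
    using canonical_shift_degree_zero[OF one u] x_one unfolding a_def b_def by auto
  have "shift u a (\<lambda>_. 0) + shift u (\<lambda>_. 0) b = u + shift u a b"
    by (simp add: shift_def algebra_simps)
  then have "x (shift u a (\<lambda>_. 0)) * x (shift u (\<lambda>_. 0) b) = x u"
    using orbit_mult[OF x a_Ssg b_Ssg] orbit_mult[OF x u(1) c(1)] c(2) by simp
  moreover have "(\<Prod>t<k. of_nat (pdeg u t choose a t)) = (1::'k)"
    by (intro prod.neutral) (simp add: a_def canonical_index_def)
  ultimately show ?thesis
    unfolding mul_term_def a_def[symmetric] b_def[symmetric] by simp
qed

lemma rmul_self_eq_if_one_on_degree_zero:
  fixes x :: "int ^ 'n \<Rightarrow> 'k::field"
  assumes one: "\<forall>t<k. emb (p t) \<notin> \<gamma> \<longrightarrow> (e1 t \<in> perp \<gamma> \<longleftrightarrow> e2 t \<notin> perp \<gamma>)"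
    and x: "x \<in> orbit \<sigma> \<gamma>"
    and x_one: "\<forall>w\<in>Ssg \<sigma> \<inter> perp \<gamma>. (\<forall>s<k. ipair (p s) w = 0) \<longrightarrow> x w = 1"
  shows "rmul \<sigma> p e1 e2 k x x = x"
proof
  fix u
  show "rmul \<sigma> p e1 e2 k x x u = x u"
  proof (cases "u \<in> Ssg \<sigma>")
    case False
    then show ?thesis by (simp add: rmul_outside orbit_outside[OF x])
  next
    case u: True
    show ?thesis
    proof (cases "u \<in> perp \<gamma>")
      case False
      then show ?thesis using rmul_vanishes_off_perp[OF x u] orbit_nonzero_iff[OF x u] by simp
    next
      case True
      have "canonical_index u \<in> PiE {..<k} (\<lambda>t. {..pdeg u t})"
        by (auto simp: canonical_index_def PiE_iff)
      moreover have "\<forall>i \<in> PiE {..<k} (\<lambda>t. {..pdeg u t}) - {canonical_index u}. mul_term x x u i = 0"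
        using mul_term_nonzero_canonical[OF one x u] by blast
      ultimately have "rmul \<sigma> p e1 e2 k x x u = (\<Sum>i\<in>{canonical_index u}. mul_term x x u i)"
        unfolding rmul_apply[OF u] by (intro sum.mono_neutral_right) (auto intro: finite_PiE)
      also have "\<dots> = x u" using mul_term_canonical[OF one x x_one u True] by simp
      finally show ?thesis .
    qed
  qed
qed

lemma idempotents_eq_one_on_degree_zero:
  assumes one: "\<forall>t<k. emb (p t) \<notin> \<gamma> \<longrightarrow> (e1 t \<in> perp \<gamma> \<longleftrightarrow> e2 t \<notin> perp \<gamma>)"
  shows "{x \<in> (orbit \<sigma> \<gamma> :: (int ^ 'n \<Rightarrow> 'k::field) set). rmul \<sigma> p e1 e2 k x x = x}
       = {x \<in> orbit \<sigma> \<gamma>. \<forall>u\<in>Ssg \<sigma> \<inter> perp \<gamma>. (\<forall>s<k. ipair (p s) u = 0) \<longrightarrow> x u = 1}"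
proof (intro equalityI subsetI)
  fix x :: "int ^ 'n \<Rightarrow> 'k" assume "x \<in> {x \<in> orbit \<sigma> \<gamma>. rmul \<sigma> p e1 e2 k x x = x}"
  then show "x \<in> {x \<in> orbit \<sigma> \<gamma>. \<forall>u\<in>Ssg \<sigma> \<inter> perp \<gamma>. (\<forall>s<k. ipair (p s) u = 0) \<longrightarrow> x u = 1}"
    using idempotent_eq_1[of x] by blast
next
  fix x :: "int ^ 'n \<Rightarrow> 'k"
  assume "x \<in> {x \<in> orbit \<sigma> \<gamma>. \<forall>u\<in>Ssg \<sigma> \<inter> perp \<gamma>. (\<forall>s<k. ipair (p s) u = 0) \<longrightarrow> x u = 1}"
  then show "x \<in> {x \<in> orbit \<sigma> \<gamma>. rmul \<sigma> p e1 e2 k x x = x}"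
    using rmul_self_eq_if_one_on_degree_zero[OF one, of x] by blast
qed

lemma idempotents_eq_xpt:
  assumes rays: "\<forall>r<k. emb (p r) \<in> \<gamma>"
  shows "{x \<in> (orbit \<sigma> \<gamma> :: (int ^ 'n \<Rightarrow> 'k::field) set). rmul \<sigma> p e1 e2 k x x = x} = {xpt \<sigma> \<gamma>}"
proof -
  have "{x \<in> (orbit \<sigma> \<gamma> :: (int ^ 'n \<Rightarrow> 'k) set). rmul \<sigma> p e1 e2 k x x = x}
      = {x \<in> orbit \<sigma> \<gamma>. \<forall>u\<in>Ssg \<sigma> \<inter> perp \<gamma>. (\<forall>s<k. ipair (p s) u = 0) \<longrightarrow> x u = 1}"
    using rays by (intro idempotents_eq_one_on_degree_zero) blast
  also have "\<dots> = {x \<in> orbit \<sigma> \<gamma>. \<forall>u\<in>Ssg \<sigma> \<inter> perp \<gamma>. x u = 1}"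
    using rays ipair_p_perp by auto
  also have "\<dots> = {xpt \<sigma> \<gamma>}"
    using orbit_eq_xpt_iff[OF face_subset[OF gamma_face]] xpt_in_orbit[OF face_subset[OF gamma_face]]
    by auto
  finally show ?thesis .
qed

lemma idempotents_empty:
  assumes r: "r < k" "emb (p r) \<notin> \<gamma>"
    and same: "(e1 r \<notin> perp \<gamma> \<and> e2 r \<notin> perp \<gamma>) \<or> (e1 r \<in> perp \<gamma> \<and> e2 r \<in> perp \<gamma>)"
  shows "{x \<in> (orbit \<sigma> \<gamma> :: (int ^ 'n \<Rightarrow> 'k::field) set). rmul \<sigma> p e1 e2 k x x = x} = {}"
  using idempotent_root_perp[OF _ _ r] idempotent_not_both_roots_perp[OF _ _ r] same by blast

end

theorem mainTheorem6:
  fixes \<sigma> \<tau> \<gamma> :: "(rat ^ 'n::finite) set"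
    and p e1 e2 :: "nat \<Rightarrow> int ^ 'n"
    and k :: nat
  assumes K: "alg_closed_field TYPE('k::field_char_0)"
    and cone: "rat_poly_cone \<sigma>" and sc: "strongly_convex \<sigma>"
    and tau_face: "is_face \<sigma> \<tau>"
    and tau_rays: "prim_ray_gens \<tau> = p ` {..<k}" and p_inj: "inj_on p {..<k}"
    and tau_reg: "part_of_basis p k"
    and roots: "\<forall>r<k. demazure_root \<sigma> (p r) (e1 r) \<and> demazure_root \<sigma> (p r) (e2 r)"
    and compat: "\<forall>r<k. \<forall>s<k. ipair (p s) (e1 r) = (if r = s then -1 else 0)
                             \<and> ipair (p s) (e2 r) = (if r = s then -1 else 0)"
    and gamma_face: "is_face \<sigma> \<gamma>"
  defines "E \<equiv> {x \<in> (orbit \<sigma> \<gamma> :: (int ^ 'n \<Rightarrow> 'k) set). rmul \<sigma> p e1 e2 k x x = x}"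
  shows "(\<tau> \<subseteq> \<gamma> \<longrightarrow> E = {xpt \<sigma> \<gamma>})
       \<and> ((\<exists>r<k. emb (p r) \<notin> \<gamma> \<and>
             ((e1 r \<notin> perp \<gamma> \<and> e2 r \<notin> perp \<gamma>) \<or> (e1 r \<in> perp \<gamma> \<and> e2 r \<in> perp \<gamma>)))
            \<longrightarrow> E = {})
       \<and> ((\<forall>r<k. emb (p r) \<notin> \<gamma> \<longrightarrow> (e1 r \<in> perp \<gamma> \<longleftrightarrow> e2 r \<notin> perp \<gamma>))
            \<longrightarrow> E = {x \<in> orbit \<sigma> \<gamma>. \<forall>u \<in> perp (qcone (\<tau> \<union> \<gamma>)) \<inter> Ssg \<sigma>. x u = 1})"
proof -
  interpret root_monoid \<sigma> \<gamma> p e1 e2 k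
    using cone sc gamma_face roots compat by unfold_locales
  have rays_in_tau: "\<forall>r<k. emb (p r) \<in> \<tau>"
    using tau_rays prim_ray_gen_in_cone by blast
  have "perp \<tau> = {u. \<forall>s<k. ipair (p s) u = 0}"
    using perp_face_iff_ray_gens[OF cone sc tau_face] tau_rays by auto
  then have perp_tau_gamma:
    "perp (qcone (\<tau> \<union> \<gamma>)) \<inter> Ssg \<sigma> = {u \<in> Ssg \<sigma> \<inter> perp \<gamma>. \<forall>s<k. ipair (p s) u = 0}"
    by (auto simp: perp_qcone perp_Un)
  show ?thesis
  proof (intro conjI impI)
    assume "\<tau> \<subseteq> \<gamma>"
    then show "E = {xpt \<sigma> \<gamma>}"
      unfolding E_def using rays_in_tau by (intro idempotents_eq_xpt) blast
  next
    assume "\<exists>r<k. emb (p r) \<notin> \<gamma> \<and>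
      ((e1 r \<notin> perp \<gamma> \<and> e2 r \<notin> perp \<gamma>) \<or> (e1 r \<in> perp \<gamma> \<and> e2 r \<in> perp \<gamma>))"
    then show "E = {}" unfolding E_def using idempotents_empty by blast
  next
    assume "\<forall>r<k. emb (p r) \<notin> \<gamma> \<longrightarrow> (e1 r \<in> perp \<gamma> \<longleftrightarrow> e2 r \<notin> perp \<gamma>)"
    then show "E = {x \<in> orbit \<sigma> \<gamma>. \<forall>u \<in> perp (qcone (\<tau> \<union> \<gamma>)) \<inter> Ssg \<sigma>. x u = 1}"
      unfolding E_def perp_tau_gamma by (subst idempotents_eq_one_on_degree_zero) auto
  qed
qed

end
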